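(* Let $J_1,\dots,J_7$ be pairwise anticommuting orthogonal complex structures on $\mathfrak a=\mathbb R^8$ and $V=\mathrm{Span}(J_1,\dots,J_5,J_6,J_6J_7)$, with an inner product whose restriction to $\mathrm{Span}(J_1,\dots,J_5)$ is standard, with $\mathrm{Span}(J_6,J_6J_7)\perp\mathrm{Span}(J_1,\dots,J_5)$, and whose restriction to $\mathrm{Span}(J_6,J_6J_7)$ is arbitrary. Then $(V,\langle\cdot,\cdot\rangle)$ is a WS-pair, while $V$ is not non-singular.
   Context: Orthogonal complex structures on $\mathbb R^8$ are orthogonal matrices $J$ with $J^2=-I_8$. An inner product on $V\subset\mathfrak{so}(8)$ is standard if it is a positive multiple of $(J,K)\mapsto-\mathrm{Tr}(JK)$. $V$ is non-singular if every nonzero element of $V$ is invertible. For a Euclidean space $\mathfrak a$, a subspace $V\subset\mathfrak{so}(\mathfrak a)$ with inner product $\langle\cdot,\cdot\rangle$ defines the metric 2-step nilpotent Lie algebra $\mathfrak n=V\oplus\mathfrak a$ (orthogonal sum, $V$ central, $\langle J,[X,Y]\rangle=\langle JX,Y\rangle$); it is a WS-pair if the corresponding simply connected nilpotent Lie group with left-invariant metric is weakly symmetric. Standing fact: this holds iff for every $J\in V$, $X\in\mathfrak a$ there is $N\in\mathcal N(V)=\{N\in O(\mathfrak a): NVN^{-1}\subset V$, $K\mapsto NKN^{-1}$ orthogonal on $(V,\langle\cdot,\cdot\rangle)\}$ with $NX=-X$, $NJ=-JN$. *)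

theory Defs
  imports "HOL-Analysis.Analysis"
begin

type_synonym mat8 = "real^8^8"

definition ocs :: "mat8 \<Rightarrow> bool" where
  "ocs J \<longleftrightarrow> orthogonal_matrix J \<and> J ** J = - mat 1"

definition inner_product_on :: "mat8 set \<Rightarrow> (mat8 \<Rightarrow> mat8 \<Rightarrow> real) \<Rightarrow> bool" where
  "inner_product_on V ip \<longleftrightarrow>
     (\<forall>x\<in>V. \<forall>y\<in>V. ip x y = ip y x) \<and>
     (\<forall>x\<in>V. \<forall>y\<in>V. \<forall>z\<in>V. \<forall>a b. ip (a *\<^sub>R x + b *\<^sub>R y) z = a * ip x z + b * ip y z) \<and>
     (\<forall>x\<in>V. x \<noteq> 0 \<longrightarrow> ip x x > 0)"

definition standard_on :: "mat8 set \<Rightarrow> (mat8 \<Rightarrow> mat8 \<Rightarrow> real) \<Rightarrow> bool" where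
  "standard_on W ip \<longleftrightarrow> (\<exists>c>0. \<forall>J\<in>W. \<forall>K\<in>W. ip J K = c * (- trace (J ** K)))"

definition normalizer :: "mat8 set \<Rightarrow> (mat8 \<Rightarrow> mat8 \<Rightarrow> real) \<Rightarrow> mat8 set" where
  "normalizer V ip = {N. orthogonal_matrix N \<and>
      (\<forall>K\<in>V. N ** K ** matrix_inv N \<in> V) \<and>
      (\<forall>K\<in>V. \<forall>L\<in>V. ip (N ** K ** matrix_inv N) (N ** L ** matrix_inv N) = ip K L)}"

text \<open>WS-pair, via the standing characterization.\<close>
definition WS_pair :: "mat8 set \<Rightarrow> (mat8 \<Rightarrow> mat8 \<Rightarrow> real) \<Rightarrow> bool" where
  "WS_pair V ip \<longleftrightarrow> (\<forall>J\<in>V. \<forall>X::real^8. \<exists>N\<in>normalizer V ip.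
      N *v X = - X \<and> N ** J = - (J ** N))"

definition nonsingular :: "mat8 set \<Rightarrow> bool" where
  "nonsingular V \<longleftrightarrow> (\<forall>K\<in>V. K \<noteq> 0 \<longrightarrow> invertible K)"

end

theory Submission
  imports Defs
begin

text \<open>
  Write \<open>L(c) = c\<^sub>1J\<^sub>1 + \<dots> + c\<^sub>5J\<^sub>5\<close>. The \<open>J\<^sub>k\<close> anticommute and square to \<open>-1\<close>,
  so \<open>L(c)\<^sup>2 = -|c|\<^sup>2\<close>, and for a unit vector \<open>u\<close> conjugation by \<open>L(u)\<close> acts on
  \<open>V\<^sub>5 = L(\<real>\<^sup>5)\<close> as the reflection of \<open>\<real>\<^sup>5\<close> in the line \<open>\<real>u\<close>; moreover \<open>J\<^sub>6, J\<^sub>7\<close>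
  anticommute with \<open>V\<^sub>5\<close>, hence \<open>J\<^sub>6J\<^sub>7\<close> commutes with it.
  Given \<open>J = L(a) + B\<close> with \<open>B \<in> span(J\<^sub>6, J\<^sub>6J\<^sub>7)\<close> and a vector \<open>X\<close>, take
  \<open>N = J\<^sub>7L(u\<^sub>1)L(u\<^sub>2)\<close> for unit vectors \<open>u\<^sub>1, u\<^sub>2 \<perp> a\<close>. Conjugation by \<open>N\<close> acts on \<open>V\<^sub>5\<close>
  by an isometry sending \<open>L(a)\<close> to \<open>-L(a)\<close> and negates \<open>J\<^sub>6\<close> and \<open>J\<^sub>6J\<^sub>7\<close>, so \<open>N \<in> N(V)\<close>
  anticommutes with \<open>J\<close>; and \<open>NX = -X\<close> as soon as \<open>L(u\<^sub>2)X = J\<^sub>7L(u\<^sub>1)X\<close>.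
  Such \<open>u\<^sub>1, u\<^sub>2\<close> exist: for \<open>X \<noteq> 0\<close> the vectors \<open>X, J\<^sub>1X, \<dots>, J\<^sub>7X\<close> form an orthogonal
  basis of \<open>\<real>\<^sup>8\<close>, and \<open>u\<^sub>1\<close> can be chosen (three linear conditions in \<open>\<real>\<^sup>5\<close>) so that
  \<open>J\<^sub>7L(u\<^sub>1)X\<close> is orthogonal to \<open>X, J\<^sub>6X, J\<^sub>7X\<close> and \<open>L(a)X\<close>; it then lies in \<open>L(\<real>\<^sup>5)X\<close>.
  Finally \<open>V\<close> is singular since \<open>J\<^sub>1\<close> and \<open>J\<^sub>6J\<^sub>7\<close> commute and both square to \<open>-1\<close>, so
  \<open>(J\<^sub>1 + J\<^sub>6J\<^sub>7)(J\<^sub>1 - J\<^sub>6J\<^sub>7) = 0\<close>.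
\<close>

lemma matrix_add_rdistrib: "((A::'a::semiring_1^'n^'m) + B) ** C = A ** C + B ** C"
  by (simp add: matrix_matrix_mult_def vec_eq_iff algebra_simps sum.distrib)

lemma matrix_mul_uminus_left: "(- A) ** (B::'a::ring_1^'n^'m) = - (A ** B)"
  by (simp add: matrix_matrix_mult_def vec_eq_iff sum_negf)

lemma matrix_mul_uminus_right: "(A::'a::ring_1^'n^'m) ** (- B) = - (A ** B)"
  by (simp add: matrix_matrix_mult_def vec_eq_iff sum_negf)

lemma matrix_mul_diff_left: "((A::'a::ring_1^'n^'m) - B) ** C = A ** C - B ** C"
  by (simp add: matrix_matrix_mult_def vec_eq_iff algebra_simps sum_subtractf)

lemma matrix_mul_diff_right: "(A::'a::ring_1^'n^'m) ** (B - C) = A ** B - A ** C"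
  by (simp add: matrix_matrix_mult_def vec_eq_iff algebra_simps sum_subtractf)

lemma matrix_mul_sum_left: "(\<Sum>i\<in>S. f i) ** (B::'a::semiring_1^'n^'m) = (\<Sum>i\<in>S. f i ** B)"
  by (induction S rule: infinite_finite_induct) (simp_all add: matrix_add_rdistrib)

lemma matrix_mul_sum_right: "(B::'a::semiring_1^'n^'m) ** (\<Sum>i\<in>S. f i) = (\<Sum>i\<in>S. B ** f i)"
  by (induction S rule: infinite_finite_induct) (simp_all add: matrix_add_ldistrib)

lemma matrix_vector_mult_sum_left: "(\<Sum>i\<in>S. f i) *v (x::'a::semiring_1^'n) = (\<Sum>i\<in>S. (f i::'a^'n^'m) *v x)"
  by (induction S rule: infinite_finite_induct) (simp_all add: matrix_vector_mult_add_rdistrib)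

lemma matrix_vector_mult_uminus_left: "(- (A::'a::ring_1^'n^'m)) *v x = - (A *v x)"
  by (simp add: matrix_vector_mult_def vec_eq_iff sum_negf)

lemma transpose_sum: "transpose (\<Sum>i\<in>S. (f i::'a::semiring_1^'n^'m)) = (\<Sum>i\<in>S. transpose (f i))"
  by (induction S rule: infinite_finite_induct) (simp_all add: transpose_def vec_eq_iff)

lemma matrix_inv_right: "invertible (A::'a::semiring_1^'n^'m) \<Longrightarrow> A ** matrix_inv A = mat 1"
  unfolding invertible_def matrix_inv_def by (rule someI_ex[THEN conjunct1])

lemma orthogonal_matrix_invertible: "orthogonal_matrix (A::real^'n^'n) \<Longrightarrow> invertible A"
  unfolding orthogonal_matrix_def invertible_def by blast

lemma conjugate_eq_if_intertwines:
  assumes "invertible (N::'a::semiring_1^'n^'n)" and "N ** K = K' ** N"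
  shows "N ** K ** matrix_inv N = K'"
  by (simp add: assms(2) matrix_mul_assoc[symmetric] matrix_inv_right[OF assms(1)])

lemma anticommute_mult_commute:
  fixes A B C :: "'a::ring_1^'n^'n"
  assumes "C ** A = - (A ** C)" and "C ** B = - (B ** C)"
  shows "C ** (A ** B) = (A ** B) ** C"
  by (simp add: matrix_mul_assoc assms(1) matrix_mul_uminus_left)
     (simp add: matrix_mul_assoc[symmetric] assms(2) matrix_mul_uminus_right)

lemma anticommute_mult_anticommute:
  fixes A B C :: "'a::ring_1^'n^'n"
  assumes "C ** A = - (A ** C)" and "C ** B = B ** C"
  shows "C ** (A ** B) = - ((A ** B) ** C)"
  by (simp add: matrix_mul_assoc assms(1) matrix_mul_uminus_left)
     (simp add: matrix_mul_assoc[symmetric] assms(2))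

lemma commute_mult_commute:
  fixes A B C :: "'a::semiring_1^'n^'n"
  assumes "C ** A = A ** C" and "C ** B = B ** C"
  shows "C ** (A ** B) = (A ** B) ** C"
  by (simp add: matrix_mul_assoc assms(1)) (simp add: matrix_mul_assoc[symmetric] assms(2))

lemma span_anticommuting:
  fixes N :: "'a::real_algebra_1^'n^'n"
  assumes "\<And>B. B \<in> S \<Longrightarrow> N ** B = - (B ** N)" and "B \<in> span S"
  shows "N ** B = - (B ** N)"
  using assms(2)
proof (induction rule: span_induct)
  show "subspace {B. N ** B = - (B ** N)}"
    by (auto simp: subspace_def matrix_add_ldistrib matrix_add_rdistrib matrix_scalar_ac
        scalar_matrix_assoc[symmetric])
qed (use assms(1) in auto)

lemma mat_1_neq_0: "(mat 1 :: 'a::zero_neq_one^'n^'n) \<noteq> 0"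
proof
  fix i :: 'n
  assume "(mat 1 :: 'a^'n^'n) = 0"
  then have "(mat 1 :: 'a^'n^'n) $ i $ i = 0" by simp
  then show False by (simp add: mat_def)
qed

lemma anticommuting_complex_structures_not_commute:
  fixes A B :: "real^'n^'n"
  assumes anti: "A ** B = - (B ** A)" and A: "A ** A = - mat 1" and B: "B ** B = - mat 1"
  shows "A ** B \<noteq> B ** A"
proof
  assume commute: "A ** B = B ** A"
  have "(2::real) *\<^sub>R (A ** B) = A ** B + B ** A"
    by (simp add: scaleR_2 commute)
  also have "\<dots> = 0" by (simp add: anti)
  finally have "A ** B = 0" by simp
  moreover have "A ** (A ** B) = - B" by (simp add: matrix_mul_assoc A matrix_mul_uminus_left)
  ultimately have "B = 0" by simp
  then show False using B mat_1_neq_0[where 'a=real and 'n='n] by simp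
qed

lemma not_invertible_sum_of_commuting_square_roots:
  fixes A B :: "real^'n^'n"
  assumes "A ** B = B ** A" and "A ** A = B ** B" and "A \<noteq> B"
  shows "\<not> invertible (A + B)"
proof
  assume "invertible (A + B)"
  then obtain C where C: "C ** (A + B) = mat 1" unfolding invertible_def by blast
  have product: "(A + B) ** (A - B) = 0"
    by (simp only: matrix_add_rdistrib matrix_mul_diff_right assms(1,2)) (simp add: algebra_simps)
  have "A - B = (C ** (A + B)) ** (A - B)" by (simp add: C)
  also have "\<dots> = 0" by (simp only: matrix_mul_assoc[symmetric] product) simp
  finally show False using assms(3) by simp
qed

lemma inner_matrix_vector_mult_left: "((A::real^'n^'m) *v x) \<bullet> y = x \<bullet> (transpose A *v y)"
  by (metis dot_lmul_matrix transpose_matrix_vector transpose_transpose)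

lemma orthogonal_matrix_inner: "orthogonal_matrix (A::real^'n^'n) \<Longrightarrow> (A *v x) \<bullet> (A *v y) = x \<bullet> y"
  by (simp add: inner_matrix_vector_mult_left matrix_vector_mul_assoc orthogonal_matrix_def
      del: transpose_matrix_vector)

lemma ocs_transpose: "ocs A \<Longrightarrow> transpose A = - A"
proof -
  assume "ocs A"
  then have A: "orthogonal_matrix A" "A ** A = - mat 1" by (auto simp: ocs_def)
  have "transpose A = (transpose A ** A) ** (- A)"
    by (simp add: matrix_mul_assoc[symmetric] matrix_mul_uminus_right A(2))
  then show ?thesis using A(1) by (simp add: orthogonal_matrix_def)
qed

lemma skew_inner_self_eq_0:
  assumes "transpose A = - (A::real^'n^'n)"
  shows "(A *v x) \<bullet> x = 0"
proof -
  have "(A *v x) \<bullet> x = x \<bullet> (- A *v x)"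
    by (simp add: inner_matrix_vector_mult_left assms del: transpose_matrix_vector)
  then show ?thesis by (simp add: matrix_vector_mult_uminus_left inner_commute)
qed

lemma skew_inner_anticommutator:
  assumes "transpose A = - (A::real^'n^'n)" and "transpose B = - B"
  shows "2 * ((A *v x) \<bullet> (B *v x)) = - (x \<bullet> ((A ** B + B ** A) *v x))"
proof -
  have "(A *v x) \<bullet> (B *v x) = - (x \<bullet> ((A ** B) *v x))"
    "(B *v x) \<bullet> (A *v x) = - (x \<bullet> ((B ** A) *v x))"
    by (simp_all add: inner_matrix_vector_mult_left assms matrix_vector_mult_uminus_left
        matrix_mul_uminus_left matrix_vector_mul_assoc del: transpose_matrix_vector)
  then show ?thesis by (simp add: matrix_vector_mult_add_rdistrib inner_add_right inner_commute)
qed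

lemma skew_anticommuting_inner_eq_0:
  assumes "transpose A = - (A::real^'n^'n)" and "transpose B = - B" and "A ** B = - (B ** A)"
  shows "(A *v x) \<bullet> (B *v x) = 0"
  using skew_inner_anticommutator[OF assms(1,2), of x] assms(3) by simp

lemma orthogonal_to_orthogonal_family_eq_0:
  fixes f :: "'i \<Rightarrow> 'a::euclidean_space"
  assumes card: "card I = DIM('a)"
    and nonzero: "\<And>i. i \<in> I \<Longrightarrow> f i \<noteq> 0"
    and orth: "\<And>i j. i \<in> I \<Longrightarrow> j \<in> I \<Longrightarrow> i \<noteq> j \<Longrightarrow> f i \<bullet> f j = 0"
    and w: "\<And>i. i \<in> I \<Longrightarrow> w \<bullet> f i = 0"
  shows "w = 0"
proof -
  have "inj_on f I"
    using nonzero orth by (metis inj_onI inner_eq_zero_iff)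
  then have "card (f ` I) = DIM('a)" using card by (simp add: card_image)
  moreover have "independent (f ` I)"
    using nonzero orth
    by (intro pairwise_orthogonal_independent) (auto simp: pairwise_def orthogonal_def)
  ultimately have "UNIV \<subseteq> span (f ` I)"
    by (intro card_ge_dim_independent) auto
  then have "orthogonal w w"
    using w by (intro orthogonal_to_span[of w]) (auto simp: orthogonal_def)
  then show ?thesis by (simp add: orthogonal_def)
qed

lemma exists_unit_orthogonal:
  fixes vs :: "'a::euclidean_space list"
  assumes "length vs < DIM('a)"
  shows "\<exists>u. u \<bullet> u = 1 \<and> (\<forall>v\<in>set vs. u \<bullet> v = 0)"
proof -
  have "dim (set vs) < DIM('a)"
    using dim_le_card'[of "set vs"] card_length[of vs] assms by simp
  then obtain x where "x \<noteq> 0" and x: "\<And>y. y \<in> span (set vs) \<Longrightarrow> orthogonal x y"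
    using orthogonal_to_subspace_exists by blast
  then have "(x /\<^sub>R norm x) \<bullet> (x /\<^sub>R norm x) = 1"
    by (simp add: dot_square_norm)
  moreover have "\<forall>v\<in>set vs. (x /\<^sub>R norm x) \<bullet> v = 0"
    using x by (auto simp: span_base orthogonal_def)
  ultimately show ?thesis by blast
qed

definition reflect_line :: "'a::real_inner \<Rightarrow> 'a \<Rightarrow> 'a" where
  "reflect_line u c = (2 * (u \<bullet> c)) *\<^sub>R u - c"

lemma reflect_line_inner: "u \<bullet> u = 1 \<Longrightarrow> reflect_line u c \<bullet> reflect_line u d = c \<bullet> d"
  by (simp add: reflect_line_def inner_diff_left inner_diff_right inner_commute algebra_simps)

lemma reflect_line_orthogonal: "u \<bullet> c = 0 \<Longrightarrow> reflect_line u c = - c"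
  by (simp add: reflect_line_def)

context
  fixes V :: "mat8 set" and ip
  assumes ip: "inner_product_on V ip" and V: "subspace V"
begin

lemma inner_product_on_linear_left:
  "x \<in> V \<Longrightarrow> y \<in> V \<Longrightarrow> z \<in> V \<Longrightarrow> ip (a *\<^sub>R x + b *\<^sub>R y) z = a * ip x z + b * ip y z"
  using ip unfolding inner_product_on_def by blast

lemma inner_product_on_add_left: "x \<in> V \<Longrightarrow> y \<in> V \<Longrightarrow> z \<in> V \<Longrightarrow> ip (x + y) z = ip x z + ip y z"
  using inner_product_on_linear_left[of x y z 1 1] by simp

lemma inner_product_on_sym: "x \<in> V \<Longrightarrow> y \<in> V \<Longrightarrow> ip x y = ip y x"
  using ip unfolding inner_product_on_def by blast

lemma inner_product_on_add_right:
  assumes "x \<in> V" "y \<in> V" "z \<in> V"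
  shows "ip z (x + y) = ip z x + ip z y"
proof -
  have "ip z (x + y) = ip (x + y) z"
    using assms V by (simp add: inner_product_on_sym subspace_add)
  also have "\<dots> = ip z x + ip z y"
    using assms by (simp add: inner_product_on_add_left inner_product_on_sym)
  finally show ?thesis .
qed

lemma inner_product_on_uminus_left: "x \<in> V \<Longrightarrow> z \<in> V \<Longrightarrow> ip (- x) z = - ip x z"
  using inner_product_on_linear_left[of x x z "- 1" 0] by simp

lemma inner_product_on_uminus:
  assumes "x \<in> V" "y \<in> V"
  shows "ip (- x) (- y) = ip x y"
proof -
  have "- y \<in> V" using assms V by (simp add: subspace_neg)
  then have "ip (- x) (- y) = - ip (- y) x"
    using assms by (simp add: inner_product_on_uminus_left inner_product_on_sym)
  also have "\<dots> = ip x y"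
    using assms by (simp add: inner_product_on_uminus_left inner_product_on_sym)
  finally show ?thesis .
qed

lemma inner_product_on_orthogonal_sum:
  assumes "U \<subseteq> V" and "W \<subseteq> V" and perp: "\<forall>A\<in>U. \<forall>B\<in>W. ip A B = 0"
    and "A \<in> U" "A' \<in> U" "B \<in> W" "B' \<in> W"
  shows "ip (A + B) (A' + B') = ip A A' + ip B B'"
proof -
  have mem: "A \<in> V" "A' \<in> V" "B \<in> V" "B' \<in> V" using assms by auto
  have "ip B A' = 0" using perp assms(5,6) mem by (simp add: inner_product_on_sym)
  moreover have "ip A B' = 0" using perp assms(4,7) by simp
  ultimately show ?thesis
    using mem V by (simp add: inner_product_on_add_left inner_product_on_add_right subspace_add)
qed

end

section \<open>Clifford systems\<close>

locale clifford_system =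
  fixes E :: "'i::finite \<Rightarrow> real^'n^'n"
  assumes E_square: "E i ** E i = - mat 1"
    and E_skew: "transpose (E i) = - E i"
    and E_anticommute: "i \<noteq> j \<Longrightarrow> E i ** E j = - (E j ** E i)"
begin

definition comb :: "real^'i \<Rightarrow> real^'n^'n" where
  "comb c = (\<Sum>i\<in>UNIV. c$i *\<^sub>R E i)"

lemma linear_comb: "linear comb"
  by (rule linearI) (simp_all add: comb_def scaleR_add_left sum.distrib scaleR_sum_right)

lemma comb_axis: "comb (axis k 1) = E k"
proof -
  have "(axis k 1 :: real^'i)$i *\<^sub>R E i = (if i = k then E i else 0)" for i
    by (simp add: axis_def)
  then show ?thesis by (simp add: comb_def)
qed

lemma range_comb: "range comb = span (range E)"
proof -
  have "Basis = range (\<lambda>k. axis k (1::real))"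
    by (auto simp: Basis_vec_def)
  moreover have "comb ` range (\<lambda>k. axis k 1) = range E"
    by (simp add: image_image comb_axis)
  ultimately have "range E = comb ` Basis" by metis
  then show ?thesis
    by (simp add: span_linear_image[OF linear_comb])
qed

lemma comb_mult: "comb c ** comb d = (\<Sum>k\<in>UNIV. \<Sum>l\<in>UNIV. (c$k * d$l) *\<^sub>R (E k ** E l))"
proof -
  have "E k ** comb d = (\<Sum>l\<in>UNIV. d$l *\<^sub>R (E k ** E l))" for k
    by (simp add: comb_def matrix_mul_sum_right matrix_scalar_ac scalar_matrix_assoc[symmetric])
  then show ?thesis
    by (simp add: comb_def[of c] matrix_mul_sum_left scalar_matrix_assoc[symmetric]
        scaleR_sum_right)
qed

lemma E_anticommutator: "E k ** E l + E l ** E k = (if k = l then (-2) *\<^sub>R mat 1 else 0)"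
proof (cases "k = l")
  case False
  then show ?thesis by (simp add: E_anticommute[OF False])
qed (simp add: E_square scaleR_2)

lemma comb_anticommutator: "comb c ** comb d + comb d ** comb c = (-2 * (c \<bullet> d)) *\<^sub>R mat 1"
proof -
  have "comb d ** comb c = (\<Sum>k\<in>UNIV. \<Sum>l\<in>UNIV. (c$k * d$l) *\<^sub>R (E l ** E k))"
    unfolding comb_mult by (subst sum.swap) (simp add: mult.commute)
  then have "comb c ** comb d + comb d ** comb c
      = (\<Sum>k\<in>UNIV. \<Sum>l\<in>UNIV. (c$k * d$l) *\<^sub>R (E k ** E l + E l ** E k))"
    by (simp add: comb_mult sum.distrib[symmetric] scaleR_add_right)
  also have "\<dots> = (\<Sum>k\<in>UNIV. (c$k * d$k) *\<^sub>R ((-2) *\<^sub>R mat 1))"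
    by (simp add: E_anticommutator if_distrib cong: if_cong)
  also have "\<dots> = (c \<bullet> d) *\<^sub>R ((-2) *\<^sub>R mat 1)"
    by (simp only: inner_vec_def inner_real_def scaleR_sum_left)
  also have "\<dots> = (-2 * (c \<bullet> d)) *\<^sub>R mat 1"
    by simp
  finally show ?thesis .
qed

lemma comb_square: "comb c ** comb c = (- (c \<bullet> c)) *\<^sub>R mat 1"
proof -
  have "2 *\<^sub>R (comb c ** comb c) = 2 *\<^sub>R ((- (c \<bullet> c)) *\<^sub>R mat 1)"
    using comb_anticommutator[of c c] by (simp add: scaleR_2)
  then show ?thesis by (metis scaleR_cancel_left zero_neq_numeral)
qed

lemma transpose_comb: "transpose (comb c) = - comb c"
  by (simp add: comb_def transpose_sum transpose_scalar E_skew sum_negf[symmetric])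

lemma orthogonal_matrix_comb: "c \<bullet> c = 1 \<Longrightarrow> orthogonal_matrix (comb c)"
  by (simp add: orthogonal_matrix transpose_comb matrix_mul_uminus_left comb_square)

lemma comb_intertwines_reflect_line:
  assumes "u \<bullet> u = 1"
  shows "comb u ** comb c = comb (reflect_line u c) ** comb u"
proof -
  have "comb (reflect_line u c) ** comb u = (2 * (u \<bullet> c)) *\<^sub>R (comb u ** comb u) - comb c ** comb u"
    by (simp add: reflect_line_def linear_diff[OF linear_comb] linear_scale[OF linear_comb]
        matrix_mul_diff_left scalar_matrix_assoc)
  also have "\<dots> = comb u ** comb c"
    using comb_anticommutator[of u c] assms by (simp add: comb_square algebra_simps)
  finally show ?thesis by simp
qed

lemma comb_anticommute:
  assumes "\<And>i. A ** E i = - (E i ** A)"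
  shows "A ** comb c = - (comb c ** A)"
  by (simp add: comb_def matrix_mul_sum_left matrix_mul_sum_right matrix_scalar_ac
      scalar_matrix_assoc[symmetric] assms sum_negf)

lemma trace_comb_mult: "trace (comb c ** comb d) = - (real CARD('n) * (c \<bullet> d))"
proof -
  have "2 * trace (comb c ** comb d) = trace (comb c ** comb d + comb d ** comb c)"
    by (simp add: trace_add trace_mul_sym[of "comb d"])
  also have "\<dots> = - 2 * (c \<bullet> d) * real CARD('n)"
    by (simp add: comb_anticommutator trace_def mat_def)
  finally show ?thesis by simp
qed

lemma inner_comb_vectors: "(comb c *v x) \<bullet> (comb d *v x) = (c \<bullet> d) * (x \<bullet> x)"
  using skew_inner_anticommutator[OF transpose_comb[of c] transpose_comb[of d], of x]
  by (simp add: comb_anticommutator scaleR_matrix_vector_assoc[symmetric]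
      matrix_vector_mult_uminus_left)

lemma inner_comb_E: "(comb c *v x) \<bullet> (E k *v x) = c$k * (x \<bullet> x)"
  using inner_comb_vectors[where d = "axis k 1"] by (simp add: comb_axis inner_axis)

lemma inner_comb_left: "(comb c *v y) \<bullet> w = c \<bullet> (\<chi> k. (E k *v y) \<bullet> w)"
proof -
  have "comb c *v y = (\<Sum>k\<in>UNIV. c$k *\<^sub>R (E k *v y))"
    by (simp add: comb_def matrix_vector_mult_sum_left scaleR_matrix_vector_assoc[symmetric])
  then have "(comb c *v y) \<bullet> w = (\<Sum>k\<in>UNIV. c$k * ((E k *v y) \<bullet> w))"
    by (simp add: inner_sum_left)
  then show ?thesis by (simp only: inner_vec_def[of c] inner_real_def vec_lambda_beta)
qed

end

section \<open>Seven anticommuting complex structures on \<open>\<real>\<^sup>8\<close>\<close>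

lemma exhaust_5:
  fixes k :: 5
  shows "k = 1 \<or> k = 2 \<or> k = 3 \<or> k = 4 \<or> k = 5"
proof (induct k)
  case (of_int z)
  then have "z = 0 \<or> z = 1 \<or> z = 2 \<or> z = 3 \<or> z = 4" by fastforce
  then show ?case by auto
qed

definition nat_of_5 :: "5 \<Rightarrow> nat" where
  "nat_of_5 k = (if k = 1 then 1 else if k = 2 then 2 else if k = 3 then 3 else if k = 4 then 4 else 5)"

lemma nat_of_5_simps [simp]:
  "nat_of_5 1 = 1" "nat_of_5 2 = 2" "nat_of_5 3 = 3" "nat_of_5 4 = 4" "nat_of_5 5 = 5"
  by (simp_all add: nat_of_5_def)

lemma range_nat_of_5: "range nat_of_5 = {1..5}"
proof -
  have "(UNIV :: 5 set) = {1, 2, 3, 4, 5}" using exhaust_5 by auto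
  then have "range nat_of_5 = nat_of_5 ` {1, 2, 3, 4, 5}" by (rule arg_cong)
  also have "\<dots> = {1..5}" by auto
  finally show ?thesis .
qed

locale anticommuting_ocs7 =
  fixes J :: "nat \<Rightarrow> mat8"
  assumes J_ocs: "i \<in> {1..7} \<Longrightarrow> ocs (J i)"
    and J_anticommute: "i \<in> {1..7} \<Longrightarrow> j \<in> {1..7} \<Longrightarrow> i \<noteq> j \<Longrightarrow> J i ** J j = - (J j ** J i)"
begin

lemma J_square: "i \<in> {1..7} \<Longrightarrow> J i ** J i = - mat 1"
  using J_ocs by (simp add: ocs_def)

lemma J_orthogonal: "i \<in> {1..7} \<Longrightarrow> orthogonal_matrix (J i)"
  using J_ocs by (simp add: ocs_def)

lemma J_skew: "i \<in> {1..7} \<Longrightarrow> transpose (J i) = - J i"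
  using J_ocs by (simp add: ocs_transpose)

lemma nat_of_5_mem: "nat_of_5 k \<in> {1..7}"
  by (simp add: nat_of_5_def)

lemma nat_of_5_inj: "nat_of_5 k = nat_of_5 l \<Longrightarrow> k = l"
  using exhaust_5[of k] exhaust_5[of l] by auto

end

sublocale anticommuting_ocs7 \<subseteq> C: clifford_system "\<lambda>k::5. J (nat_of_5 k)"
proof
  fix k l :: 5
  show "J (nat_of_5 k) ** J (nat_of_5 k) = - mat 1" by (rule J_square[OF nat_of_5_mem])
  show "transpose (J (nat_of_5 k)) = - J (nat_of_5 k)" by (rule J_skew[OF nat_of_5_mem])
  assume "k \<noteq> l"
  then show "J (nat_of_5 k) ** J (nat_of_5 l) = - (J (nat_of_5 l) ** J (nat_of_5 k))"
    using nat_of_5_inj by (intro J_anticommute nat_of_5_mem) blast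
qed

context anticommuting_ocs7
begin

abbreviation "V5 \<equiv> span {J 1, J 2, J 3, J 4, J 5}"
abbreviation "V2 \<equiv> span {J 6, J 6 ** J 7}"
abbreviation "V \<equiv> span {J 1, J 2, J 3, J 4, J 5, J 6, J 6 ** J 7}"

lemma V5_eq_range_comb: "V5 = range C.comb"
proof -
  have "range (\<lambda>k. J (nat_of_5 k)) = J ` {1..5}"
    by (simp add: image_image[symmetric] range_nat_of_5)
  also have "\<dots> = {J 1, J 2, J 3, J 4, J 5}"
    by (simp add: numeral_eq_Suc atLeastAtMostSuc_conv insert_commute)
  finally show ?thesis by (simp add: C.range_comb)
qed

lemma V_eq_sum: "V = {C.comb c + B | c B. B \<in> V2}"
proof -
  have "V = span ({J 1, J 2, J 3, J 4, J 5} \<union> {J 6, J 6 ** J 7})"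
    by (rule arg_cong[where f = span]) auto
  then show ?thesis unfolding span_Un V5_eq_range_comb by blast
qed

lemma comb_in_V5: "C.comb c \<in> V5"
  unfolding V5_eq_range_comb by (rule rangeI)

lemma V_decompose:
  assumes "K \<in> V"
  obtains c B where "K = C.comb c + B" and "B \<in> V2"
  using assms V_eq_sum by blast

lemma comb_add_in_V: "B \<in> V2 \<Longrightarrow> C.comb c + B \<in> V"
  using V_eq_sum by blast

lemma V2_subset_V: "V2 \<subseteq> V"
  by (rule span_mono) auto

lemma V5_subset_V: "V5 \<subseteq> V"
  by (rule span_mono) auto

lemma J_comb_anticommute:
  assumes "i \<in> {6, 7}"
  shows "J i ** C.comb c = - (C.comb c ** J i)"
proof (rule C.comb_anticommute)
  fix k
  have "nat_of_5 k \<in> {1..5}" by (simp add: nat_of_5_def)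
  then show "J i ** J (nat_of_5 k) = - (J (nat_of_5 k) ** J i)"
    using assms by (intro J_anticommute) auto
qed

lemma J67_comb_commute: "(J 6 ** J 7) ** C.comb c = C.comb c ** (J 6 ** J 7)"
  using anticommute_mult_commute[of "C.comb c" "J 6" "J 7"] J_comb_anticommute[of 6 c]
    J_comb_anticommute[of 7 c]
  by (simp add: matrix_mul_uminus_left matrix_mul_uminus_right)

lemma orthogonal_to_J_frame_eq_0:
  assumes x: "x \<noteq> 0" and wx: "w \<bullet> x = 0" and wJ: "\<And>i. i \<in> {1..7} \<Longrightarrow> w \<bullet> (J i *v x) = 0"
  shows "w = 0"
proof (rule orthogonal_to_orthogonal_family_eq_0)
  let ?f = "\<lambda>i. if i = 0 then x else J i *v x"
  show "card {0..7::nat} = DIM(real^8)" by simp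
  show "?f i \<noteq> 0" if "i \<in> {0..7}" for i
    using x orthogonal_matrix_inner[OF J_orthogonal, of i x x] that by auto
  show "?f i \<bullet> ?f j = 0" if "i \<in> {0..7}" "j \<in> {0..7}" "i \<noteq> j" for i j
    using that skew_inner_self_eq_0[OF J_skew] skew_anticommuting_inner_eq_0[OF J_skew J_skew J_anticommute]
    by (auto simp: inner_commute)
  show "w \<bullet> ?f i = 0" if "i \<in> {0..7}" for i
    using that wx wJ by auto
qed

lemma in_comb_image:
  assumes x: "x \<noteq> 0" and Zx: "Z \<bullet> x = 0" and Z6: "Z \<bullet> (J 6 *v x) = 0" and Z7: "Z \<bullet> (J 7 *v x) = 0"
  shows "\<exists>d. Z = C.comb d *v x"
proof -
  define d where "d = (\<chi> k. (Z \<bullet> (J (nat_of_5 k) *v x)) / (x \<bullet> x))"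
  have "Z - C.comb d *v x = 0"
  proof (rule orthogonal_to_J_frame_eq_0[OF x])
    show "(Z - C.comb d *v x) \<bullet> x = 0"
      using Zx skew_inner_self_eq_0[OF C.transpose_comb] by (simp add: inner_diff_left)
  next
    fix i :: nat
    assume "i \<in> {1..7}"
    then have "i \<in> range nat_of_5 \<or> i = 6 \<or> i = 7"
      unfolding range_nat_of_5 by auto
    then consider k where "i = nat_of_5 k" | "i = 6" | "i = 7"
      by blast
    then show "(Z - C.comb d *v x) \<bullet> (J i *v x) = 0"
    proof cases
      case 1
      then show ?thesis using x by (simp add: inner_diff_left C.inner_comb_E d_def)
    next
      case 2
      then show ?thesis
        using Z6 skew_anticommuting_inner_eq_0[OF C.transpose_comb J_skew, of 6 d x] J_comb_anticommute[of 6 d]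
        by (simp add: inner_diff_left)
    next
      case 3
      then show ?thesis
        using Z7 skew_anticommuting_inner_eq_0[OF C.transpose_comb J_skew, of 7 d x] J_comb_anticommute[of 7 d]
        by (simp add: inner_diff_left)
    qed
  qed
  then show ?thesis by auto
qed

lemma exists_units_intertwining:
  "\<exists>u1 u2. u1 \<bullet> u1 = 1 \<and> u2 \<bullet> u2 = 1 \<and> u1 \<bullet> a = 0 \<and> u2 \<bullet> a = 0 \<and>
     C.comb u2 *v x = J 7 *v (C.comb u1 *v x)"
proof (cases "x = 0")
  case True
  obtain u :: "real^5" where "u \<bullet> u = 1" "u \<bullet> a = 0"
    using exists_unit_orthogonal[of "[a]"] by auto
  then show ?thesis using True by auto
next
  case False
  \<comment> \<open>\<open>Z \<bullet> w = - (u1 \<bullet> ?g w)\<close> below, so each orthogonality condition on \<open>Z\<close> is linear in \<open>u1\<close>.\<close>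
  let ?g = "\<lambda>w. \<chi> k. (J (nat_of_5 k) *v (J 7 *v x)) \<bullet> w"
  obtain u1 :: "real^5" where u1: "u1 \<bullet> u1 = 1"
    and u1_perp: "\<forall>v\<in>set [a, ?g (J 6 *v x), ?g (C.comb a *v x)]. u1 \<bullet> v = 0"
    using exists_unit_orthogonal[of "[a, ?g (J 6 *v x), ?g (C.comb a *v x)]"] by auto
  define Z where "Z = J 7 *v (C.comb u1 *v x)"
  have "Z = - (C.comb u1 *v (J 7 *v x))"
    unfolding Z_def using J_comb_anticommute[of 7 u1]
    by (simp add: matrix_vector_mul_assoc matrix_vector_mult_uminus_left)
  then have Z_inner: "Z \<bullet> w = - (u1 \<bullet> ?g w)" for w
    by (simp add: C.inner_comb_left)
  have "Z \<bullet> x = 0"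
    using skew_anticommuting_inner_eq_0[OF C.transpose_comb J_skew, of 7 u1 x] J_comb_anticommute[of 7 u1]
    by (simp add: Z_def inner_matrix_vector_mult_left J_skew matrix_vector_mult_uminus_left
        del: transpose_matrix_vector)
  moreover have "Z \<bullet> (J 7 *v x) = 0"
    using skew_inner_self_eq_0[OF C.transpose_comb]
    by (simp add: Z_def orthogonal_matrix_inner J_orthogonal)
  moreover have "Z \<bullet> (J 6 *v x) = 0"
    using u1_perp by (simp add: Z_inner)
  ultimately obtain d where d: "Z = C.comb d *v x"
    using in_comb_image[OF False] by blast
  have "(d \<bullet> d) * (x \<bullet> x) = Z \<bullet> Z"
    by (simp add: d C.inner_comb_vectors)
  also have "\<dots> = x \<bullet> x"
    by (simp add: Z_def orthogonal_matrix_inner J_orthogonal C.inner_comb_vectors u1)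
  finally have "d \<bullet> d = 1" using False by simp
  have "(d \<bullet> a) * (x \<bullet> x) = Z \<bullet> (C.comb a *v x)"
    by (simp add: d C.inner_comb_vectors)
  also have "\<dots> = 0" using u1_perp by (simp add: Z_inner)
  finally have "d \<bullet> a = 0" using False by simp
  show ?thesis
    using u1 u1_perp \<open>d \<bullet> d = 1\<close> \<open>d \<bullet> a = 0\<close> d
    by (intro exI[of _ u1] exI[of _ d]) (simp add: Z_def)
qed

definition symmetry :: "real^5 \<Rightarrow> real^5 \<Rightarrow> mat8" where
  "symmetry u1 u2 = J 7 ** (C.comb u1 ** C.comb u2)"

lemma orthogonal_matrix_symmetry:
  "u1 \<bullet> u1 = 1 \<Longrightarrow> u2 \<bullet> u2 = 1 \<Longrightarrow> orthogonal_matrix (symmetry u1 u2)"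
  by (simp add: symmetry_def orthogonal_matrix_mul J_orthogonal C.orthogonal_matrix_comb)

lemma symmetry_comb:
  assumes u1: "u1 \<bullet> u1 = 1" and u2: "u2 \<bullet> u2 = 1"
  shows "symmetry u1 u2 ** C.comb c
    = C.comb (- reflect_line u1 (reflect_line u2 c)) ** symmetry u1 u2"
proof -
  let ?c' = "reflect_line u1 (reflect_line u2 c)"
  have J7: "J 7 ** C.comb ?c' = C.comb (- ?c') ** J 7"
    by (simp add: J_comb_anticommute linear_neg[OF C.linear_comb] matrix_mul_uminus_left)
  have "symmetry u1 u2 ** C.comb c = J 7 ** (C.comb u1 ** (C.comb u2 ** C.comb c))"
    by (simp only: symmetry_def matrix_mul_assoc)
  also have "\<dots> = J 7 ** ((C.comb u1 ** C.comb (reflect_line u2 c)) ** C.comb u2)"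
    by (simp only: C.comb_intertwines_reflect_line[OF u2] matrix_mul_assoc)
  also have "\<dots> = J 7 ** ((C.comb ?c' ** C.comb u1) ** C.comb u2)"
    by (simp only: C.comb_intertwines_reflect_line[OF u1])
  also have "\<dots> = C.comb (- ?c') ** symmetry u1 u2"
    by (simp only: symmetry_def matrix_mul_assoc J7)
  finally show ?thesis .
qed

lemma symmetry_anticommute_V2:
  assumes "B \<in> V2"
  shows "symmetry u1 u2 ** B = - (B ** symmetry u1 u2)"
proof (rule span_anticommuting[OF _ assms])
  let ?P = "C.comb u1 ** C.comb u2"
  have J6_P: "J 6 ** ?P = ?P ** J 6"
    by (rule anticommute_mult_commute) (simp_all add: J_comb_anticommute)
  have J67_P: "(J 6 ** J 7) ** ?P = ?P ** (J 6 ** J 7)"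
    by (rule commute_mult_commute) (simp_all add: J67_comb_commute)
  have J67_J7: "(J 6 ** J 7) ** J 7 = - (J 7 ** (J 6 ** J 7))"
    using anticommute_mult_anticommute[of "J 7" "J 6" "J 7"] J_anticommute[of 7 6] by simp
  have "J 6 ** symmetry u1 u2 = - (symmetry u1 u2 ** J 6)"
    unfolding symmetry_def
    by (rule anticommute_mult_anticommute) (simp_all add: J_anticommute[of 6 7] J6_P)
  moreover have "(J 6 ** J 7) ** symmetry u1 u2 = - (symmetry u1 u2 ** (J 6 ** J 7))"
    unfolding symmetry_def
    by (rule anticommute_mult_anticommute) (simp_all add: J67_J7 J67_P)
  ultimately show "symmetry u1 u2 ** B = - (B ** symmetry u1 u2)" if "B \<in> {J 6, J 6 ** J 7}" for B
    using that by (auto simp: minus_equation_iff)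
qed

lemma symmetry_vector:
  assumes u1: "u1 \<bullet> u1 = 1" and intertwine: "C.comb u2 *v x = J 7 *v (C.comb u1 *v x)"
  shows "symmetry u1 u2 *v x = - x"
proof -
  have "symmetry u1 u2 *v x = (J 7 ** C.comb u1 ** J 7 ** C.comb u1) *v x"
    by (simp add: symmetry_def matrix_vector_mul_assoc[symmetric] intertwine)
  also have "J 7 ** C.comb u1 ** J 7 ** C.comb u1 = - (C.comb u1 ** (J 7 ** J 7) ** C.comb u1)"
    by (simp add: J_comb_anticommute matrix_mul_uminus_left matrix_mul_assoc)
  also have "\<dots> = - mat 1"
    by (simp add: J_square C.comb_square u1 matrix_mul_uminus_left matrix_mul_uminus_right)
  finally show ?thesis by (simp add: matrix_vector_mult_uminus_left)
qed

lemma standard_on_V5_comb: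
  assumes "standard_on V5 ip"
  obtains \<kappa> where "\<And>c d. ip (C.comb c) (C.comb d) = \<kappa> * (c \<bullet> d)"
proof -
  obtain s where s: "\<And>A B. A \<in> V5 \<Longrightarrow> B \<in> V5 \<Longrightarrow> ip A B = s * (- trace (A ** B))"
    using assms unfolding standard_on_def by blast
  have "ip (C.comb c) (C.comb d) = (8 * s) * (c \<bullet> d)" for c d
    using s[OF comb_in_V5 comb_in_V5] by (simp add: C.trace_comb_mult)
  then show ?thesis using that by blast
qed

lemma symmetry_conjugate:
  assumes u1: "u1 \<bullet> u1 = 1" and u2: "u2 \<bullet> u2 = 1" and B: "B \<in> V2"
  shows "symmetry u1 u2 ** (C.comb c + B) ** matrix_inv (symmetry u1 u2)
    = C.comb (- reflect_line u1 (reflect_line u2 c)) + - B"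
  by (intro conjugate_eq_if_intertwines orthogonal_matrix_invertible orthogonal_matrix_symmetry u1 u2)
     (simp add: matrix_add_ldistrib matrix_add_rdistrib symmetry_comb[OF u1 u2]
       symmetry_anticommute_V2[OF B] matrix_mul_diff_left)

lemma symmetry_in_normalizer:
  assumes ip: "inner_product_on V ip" and std: "standard_on V5 ip"
    and perp: "\<forall>A\<in>V5. \<forall>B\<in>V2. ip A B = 0"
    and u1: "u1 \<bullet> u1 = 1" and u2: "u2 \<bullet> u2 = 1"
  shows "symmetry u1 u2 \<in> normalizer V ip"
  unfolding normalizer_def
proof (intro CollectI conjI ballI)
  let ?N = "symmetry u1 u2"
  let ?\<sigma> = "\<lambda>c. - reflect_line u1 (reflect_line u2 c)"
  obtain \<kappa> where \<kappa>: "\<And>c d. ip (C.comb c) (C.comb d) = \<kappa> * (c \<bullet> d)"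
    using standard_on_V5_comb[OF std] by blast
  have split: "ip (C.comb c + B) (C.comb c' + B') = \<kappa> * (c \<bullet> c') + ip B B'"
    if "B \<in> V2" "B' \<in> V2" for c c' B B'
    using inner_product_on_orthogonal_sum[OF ip subspace_span V5_subset_V V2_subset_V perp
        comb_in_V5 comb_in_V5 that]
    by (simp add: \<kappa>)
  show "orthogonal_matrix ?N" using u1 u2 by (rule orthogonal_matrix_symmetry)
  fix K assume "K \<in> V"
  then obtain c B where K: "K = C.comb c + B" "B \<in> V2" by (rule V_decompose)
  then have "?N ** K ** matrix_inv ?N = C.comb (?\<sigma> c) + - B"
    by (simp only: symmetry_conjugate u1 u2)
  then show "?N ** K ** matrix_inv ?N \<in> V"
    using comb_add_in_V[OF span_neg[OF K(2)]] by (simp only:)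
  fix L assume "L \<in> V"
  then obtain d D where L: "L = C.comb d + D" "D \<in> V2" by (rule V_decompose)
  have "ip (?N ** K ** matrix_inv ?N) (?N ** L ** matrix_inv ?N)
      = ip (C.comb (?\<sigma> c) + - B) (C.comb (?\<sigma> d) + - D)"
    by (simp add: K L symmetry_conjugate u1 u2)
  also have "\<dots> = \<kappa> * (?\<sigma> c \<bullet> ?\<sigma> d) + ip (- B) (- D)"
    by (rule split) (use K(2) L(2) span_neg in auto)
  also have "\<dots> = \<kappa> * (c \<bullet> d) + ip B D"
    using inner_product_on_uminus[OF ip subspace_span] K(2) L(2) V2_subset_V
    by (auto simp: reflect_line_inner u1 u2)
  also have "\<dots> = ip K L"
    by (simp add: K L split)
  finally show "ip (?N ** K ** matrix_inv ?N) (?N ** L ** matrix_inv ?N) = ip K L" .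
qed

lemma WS_pair_V:
  assumes ip: "inner_product_on V ip" and std: "standard_on V5 ip"
    and perp: "\<forall>A\<in>V5. \<forall>B\<in>V2. ip A B = 0"
  shows "WS_pair V ip"
  unfolding WS_pair_def
proof (intro ballI allI)
  fix K X assume "K \<in> V"
  then obtain a B where K: "K = C.comb a + B" "B \<in> V2" by (rule V_decompose)
  obtain u1 u2 where u: "u1 \<bullet> u1 = 1" "u2 \<bullet> u2 = 1" "u1 \<bullet> a = 0" "u2 \<bullet> a = 0"
    and intertwine: "C.comb u2 *v X = J 7 *v (C.comb u1 *v X)"
    using exists_units_intertwining by blast
  have "symmetry u1 u2 ** K = - (K ** symmetry u1 u2)"
    using u K(2) by (simp add: K(1) matrix_add_ldistrib matrix_add_rdistrib symmetry_comb
        symmetry_anticommute_V2 reflect_line_orthogonal linear_neg[OF C.linear_comb]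
        matrix_mul_uminus_left)
  then show "\<exists>N\<in>normalizer V ip. N *v X = - X \<and> N ** K = - (K ** N)"
    using symmetry_in_normalizer[OF ip std perp u(1,2)] symmetry_vector[OF u(1) intertwine]
    by blast
qed

lemma not_nonsingular_V: "\<not> nonsingular V"
proof -
  let ?B = "J 6 ** J 7"
  have J76: "J 7 ** J 6 = - ?B" by (rule J_anticommute) auto
  have "?B ** ?B = J 6 ** ((J 7 ** J 6) ** J 7)" by (simp only: matrix_mul_assoc)
  also have "\<dots> = - ((J 6 ** J 6) ** (J 7 ** J 7))"
    by (simp add: J76 matrix_mul_uminus_left matrix_mul_uminus_right matrix_mul_assoc)
  also have "\<dots> = - mat 1" by (simp add: J_square matrix_mul_uminus_left)
  finally have square: "J 1 ** J 1 = ?B ** ?B" by (simp add: J_square)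
  have commute: "J 1 ** ?B = ?B ** J 1"
    by (rule anticommute_mult_commute; rule J_anticommute) auto
  have J2_B: "J 2 ** ?B = ?B ** J 2"
    by (rule anticommute_mult_commute; rule J_anticommute) auto
  have "J 1 ** J 2 \<noteq> J 2 ** J 1"
    by (rule anticommuting_complex_structures_not_commute; rule J_anticommute J_square) auto
  then have ne: "J 1 \<noteq> s *\<^sub>R ?B" for s
    using J2_B by (auto simp: matrix_scalar_ac scalar_matrix_assoc[symmetric])
  have "J 1 \<noteq> ?B" using ne[of 1] by simp
  moreover have "J 1 + ?B \<noteq> 0" using ne[of "- 1"] by (simp add: eq_neg_iff_add_eq_0[symmetric])
  moreover have "J 1 + ?B \<in> V" by (intro span_add span_base) auto
  ultimately show ?thesis
    using not_invertible_sum_of_commuting_square_roots[OF commute square]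
    by (auto simp: nonsingular_def)
qed

end

theorem mainTheorem12:
  fixes J :: "nat \<Rightarrow> mat8" and ip :: "mat8 \<Rightarrow> mat8 \<Rightarrow> real"
  assumes ocs: "\<forall>i\<in>{1..7}. ocs (J i)"
    and anti: "\<forall>i\<in>{1..7}. \<forall>j\<in>{1..7}. i \<noteq> j \<longrightarrow> J i ** J j = - (J j ** J i)"
    and ip: "inner_product_on (span {J 1, J 2, J 3, J 4, J 5, J 6, J 6 ** J 7}) ip"
    and std: "standard_on (span {J 1, J 2, J 3, J 4, J 5}) ip"
    and perp: "\<forall>A\<in>span {J 1, J 2, J 3, J 4, J 5}. \<forall>B\<in>span {J 6, J 6 ** J 7}. ip A B = 0"
  shows "WS_pair (span {J 1, J 2, J 3, J 4, J 5, J 6, J 6 ** J 7}) ip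
         \<and> \<not> nonsingular (span {J 1, J 2, J 3, J 4, J 5, J 6, J 6 ** J 7})"
proof -
  interpret anticommuting_ocs7 J
  proof
    show "ocs (J i)" if "i \<in> {1..7}" for i
      using ocs that by blast
    show "J i ** J j = - (J j ** J i)" if "i \<in> {1..7}" "j \<in> {1..7}" "i \<noteq> j" for i j
      using anti that by blast
  qed
  show ?thesis using WS_pair_V[OF ip std perp] not_nonsingular_V by blast
qed

end
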